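(* Let $\vec f$ be a smooth closed plane curve parametrized by arc length with rotation number $n\ge1$. Then \[ I_0=\frac{16\pi^4}{L^3}\sum_{k\in\mathbb Z}k^3(k-n)|\hat f(k)|^2=\frac{16\pi^4}{L^3}\sum_{k\in\mathbb Z}k^2(k-n)^2|\hat f(k)|^2 . \] In particular $I_0\ge 0$, with equality if and only if the image of $\vec f$ is an $n$-fold circle.
   Context: A closed plane curve is a smooth map $\vec f:\mathbb{R}/L\mathbb{Z}\to\mathbb{R}^2$ parametrized by arc length $s$, where $L>0$ is its length. $\vec\tau=\partial_s\vec f$, $\vec\nu$ is $\vec\tau$ rotated counterclockwise by $\pi/2$, $\kappa=\partial_s^2\vec f\cdot\vec\nu$, and the rotation number is $n=\frac{1}{2\pi}\int_0^L\kappa\,ds$. Let $\tilde\kappa=\kappa-\frac1L\int_0^L\kappa\,ds$ and $I_0=L\int_0^L\tilde\kappa^2\,ds$. Identifying $\mathbb{R}^2$ with $\mathbb{C}$, $f=f_1+if_2$, and $\hat f(k)=L^{-1/2}\int_0^L f(s)e^{-2\pi i k s/L}\,ds$. An $n$-fold circle is the image of a map of the form $s\mapsto c+re^{2\pi i n (s+\sigma)/L}$ with $c\in\mathbb C$, $r>0$, $\sigma\in\mathbb R$. *)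

theory Defs
  imports "HOL-Analysis.Analysis"
begin

text \<open>Plane curves are maps real \<Rightarrow> complex (identifying R^2 with C).\<close>

definition vderiv :: "(real \<Rightarrow> complex) \<Rightarrow> real \<Rightarrow> complex" where
  "vderiv g = (\<lambda>t. vector_derivative g (at t))"

definition smooth_curve :: "(real \<Rightarrow> complex) \<Rightarrow> bool" where
  "smooth_curve f \<longleftrightarrow> (\<forall>k x. (vderiv ^^ k) f differentiable (at x))"

definition closed_arclength_curve :: "(real \<Rightarrow> complex) \<Rightarrow> real \<Rightarrow> bool" where
  "closed_arclength_curve f L \<longleftrightarrow> L > 0 \<and> smooth_curve f \<and>
     (\<forall>s. f (s + L) = f s) \<and> (\<forall>s. norm (vderiv f s) = 1)"

definition cdot :: "complex \<Rightarrow> complex \<Rightarrow> real" where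
  "cdot a b = Re (a * cnj b)"

definition tangent :: "(real \<Rightarrow> complex) \<Rightarrow> real \<Rightarrow> complex" where
  "tangent f s = vderiv f s"

definition normal :: "(real \<Rightarrow> complex) \<Rightarrow> real \<Rightarrow> complex" where
  "normal f s = \<i> * tangent f s"

definition curvature :: "(real \<Rightarrow> complex) \<Rightarrow> real \<Rightarrow> real" where
  "curvature f s = cdot (vderiv (vderiv f) s) (normal f s)"

definition rotation_number :: "(real \<Rightarrow> complex) \<Rightarrow> real \<Rightarrow> real" where
  "rotation_number f L = (1 / (2 * pi)) * integral {0..L} (curvature f)"

definition osc_curvature :: "(real \<Rightarrow> complex) \<Rightarrow> real \<Rightarrow> real \<Rightarrow> real" where
  "osc_curvature f L s = curvature f s - (1 / L) * integral {0..L} (curvature f)"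

definition I0 :: "(real \<Rightarrow> complex) \<Rightarrow> real \<Rightarrow> real" where
  "I0 f L = L * integral {0..L} (\<lambda>s. (osc_curvature f L s)\<^sup>2)"

definition fourier_coeff :: "(real \<Rightarrow> complex) \<Rightarrow> real \<Rightarrow> int \<Rightarrow> complex" where
  "fourier_coeff f L k = complex_of_real (1 / sqrt L) *
     integral {0..L} (\<lambda>s. f s * exp (- 2 * pi * \<i> * of_int k * of_real s / of_real L))"

definition is_n_fold_circle :: "(real \<Rightarrow> complex) \<Rightarrow> real \<Rightarrow> int \<Rightarrow> bool" where
  "is_n_fold_circle f L n \<longleftrightarrow> (\<exists>c r \<sigma>. r > 0 \<and>
     (\<forall>s. f s = c + of_real r * exp (2 * pi * \<i> * of_int n * of_real (s + \<sigma>) / of_real L)))"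

end

theory Submission
  imports Defs
begin

text \<open>
  Let \<open>\<omega> = \<kappa> - 2\<pi>n/L\<close> be the oscillation of the curvature. By the Frenet equation
  \<open>f'' = i \<kappa> f'\<close>, the function \<open>h = f'' - i (2\<pi>n/L) f'\<close> equals \<open>i \<omega> f'\<close>, so \<open>|h| = |\<omega>|\<close>
  and \<open>I\<^sub>0 = L \<integral>|h|\<^sup>2\<close>. Integrating by parts, the \<open>k\<close>-th Fourier coefficient of \<open>h\<close> is
  \<open>-(2\<pi>/L)\<^sup>2 k (k - n)\<close> times that of \<open>f\<close>, and Parseval's identity gives the second series.
  Moreover the inner product of \<open>h\<close> with the normal \<open>i f'\<close> is \<open>\<omega>\<close>, which has mean zero; by
  polarised Parseval \<open>\<Sum> k\<^sup>2 (k - n) |f\<^sup>^(k)|\<^sup>2 = 0\<close>, and adding \<open>n\<close> times this sum turns the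
  second series into the first. Finally \<open>I\<^sub>0 = 0\<close> means \<open>\<omega> = 0\<close>, i.e. \<open>f'' = (2\<pi>i n/L) f'\<close>,
  whose solutions with \<open>|f'| = 1\<close> are exactly the \<open>n\<close>-fold circles.
  Parseval's identity itself follows from the density of trigonometric polynomials
  (Stone-Weierstrass on the circle) and the best-approximation property of Fourier coefficients.
\<close>

section \<open>Fourier modes and trigonometric polynomials\<close>

definition fourier_mode :: "real \<Rightarrow> int \<Rightarrow> real \<Rightarrow> complex" where
  "fourier_mode L k s = exp (2 * pi * \<i> * of_int k * of_real s / of_real L)"

lemma fourier_mode_0 [simp]: "fourier_mode L k 0 = 1"
  by (simp add: fourier_mode_def)

lemma fourier_mode_zero_freq [simp]: "fourier_mode L 0 = (\<lambda>s. 1)"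
  by (simp add: fourier_mode_def fun_eq_iff)

lemma fourier_mode_eq_exp_linear:
  "fourier_mode L k = (\<lambda>s. exp ((2 * pi * \<i> * of_int k / of_real L) * of_real s))"
  unfolding fourier_mode_def by (simp add: fun_eq_iff)

lemma fourier_mode_period [simp]:
  assumes "L \<noteq> 0"
  shows "fourier_mode L k L = 1"
proof -
  have "fourier_mode L k L = exp ((2 * of_int k * pi) * \<i>)"
    unfolding fourier_mode_def using assms by (simp add: field_simps)
  also have "\<dots> = 1" by (rule exp_integer_2pi) simp
  finally show ?thesis .
qed

lemma fourier_mode_mult: "fourier_mode L j s * fourier_mode L k s = fourier_mode L (j + k) s"
  unfolding fourier_mode_def by (simp add: exp_add[symmetric] algebra_simps add_divide_distrib)

lemma cnj_fourier_mode: "cnj (fourier_mode L k s) = fourier_mode L (- k) s"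
  unfolding fourier_mode_def exp_cnj by (simp add: complex_eq_iff)

lemma fourier_mode_mult_cnj: "fourier_mode L j s * cnj (fourier_mode L k s) = fourier_mode L (j - k) s"
  unfolding cnj_fourier_mode fourier_mode_mult by simp

lemma has_vector_derivative_fourier_mode:
  "(fourier_mode L k has_vector_derivative (2 * pi * \<i> * of_int k / of_real L) * fourier_mode L k s)
     (at s within S)"
proof -
  define c where "c = 2 * pi * \<i> * of_int k / of_real L"
  have "((\<lambda>z. exp (c * z)) has_field_derivative c * exp (c * of_real s)) (at (of_real s))"
    by (auto intro!: derivative_eq_intros)
  from has_vector_derivative_real_field[OF this] show ?thesis
    unfolding fourier_mode_eq_exp_linear c_def .
qed

lemma continuous_on_fourier_mode [continuous_intros]: "continuous_on S (fourier_mode L k)"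
  unfolding fourier_mode_eq_exp_linear by (intro continuous_intros)

lemma integral_fourier_mode:
  assumes "L > 0"
  shows "integral {0..L} (fourier_mode L k) = (if k = 0 then of_real L else 0)"
proof (cases "k = 0")
  case False
  define c where "c = 2 * pi * \<i> * of_int k / of_real L"
  have "c \<noteq> 0" using False assms unfolding c_def by simp
  have "((\<lambda>s. c * fourier_mode L k s / c) has_integral
          (fourier_mode L k L / c - fourier_mode L k 0 / c)) {0..L}"
    using assms has_vector_derivative_fourier_mode[of L k]
    by (intro fundamental_theorem_of_calculus) (auto simp: c_def intro!: derivative_eq_intros)
  then have "(fourier_mode L k has_integral 0) {0..L}"
    using \<open>c \<noteq> 0\<close> assms by simp
  then show ?thesis using False by (simp add: integral_unique)
qed (use assms in \<open>simp add: scaleR_conv_of_real\<close>)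

lemma integral_fourier_mode_mult_cnj:
  assumes "L > 0"
  shows "integral {0..L} (\<lambda>s. fourier_mode L j s * cnj (fourier_mode L k s)) =
    (if j = k then of_real L else 0)"
  unfolding fourier_mode_mult_cnj integral_fourier_mode[OF assms] by simp

definition trig_poly :: "real \<Rightarrow> (real \<Rightarrow> complex) \<Rightarrow> bool" where
  "trig_poly L h \<longleftrightarrow> (\<exists>F A. finite F \<and> h = (\<lambda>s. \<Sum>k\<in>F. A k * fourier_mode L k s))"

lemma trig_polyE:
  assumes "trig_poly L h"
  obtains F A where "finite F" "h = (\<lambda>s. \<Sum>k\<in>F. A k * fourier_mode L k s)"
  using assms unfolding trig_poly_def by blast

lemma trig_poly_monomial: "trig_poly L (\<lambda>s. c * fourier_mode L k s)"
  unfolding trig_poly_def by (rule exI[of _ "{k}"], rule exI[of _ "\<lambda>_. c"]) simp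

lemma trig_poly_const: "trig_poly L (\<lambda>s. c)"
  using trig_poly_monomial[of L c 0] by simp

lemma trig_poly_add:
  assumes "trig_poly L g" "trig_poly L h"
  shows "trig_poly L (\<lambda>s. g s + h s)"
proof -
  obtain F A where F: "finite F" "g = (\<lambda>s. \<Sum>k\<in>F. A k * fourier_mode L k s)"
    using assms(1) by (rule trig_polyE)
  obtain G B where G: "finite G" "h = (\<lambda>s. \<Sum>k\<in>G. B k * fourier_mode L k s)"
    using assms(2) by (rule trig_polyE)
  define C where "C k = (if k \<in> F then A k else 0) + (if k \<in> G then B k else 0)" for k
  have "(\<Sum>k\<in>F \<union> G. (if k \<in> F then A k else 0) * fourier_mode L k s) = g s"
       "(\<Sum>k\<in>F \<union> G. (if k \<in> G then B k else 0) * fourier_mode L k s) = h s" for s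
    unfolding F(2) G(2) by (rule sum.mono_neutral_cong_right; use F G in auto)+
  then have "(\<lambda>s. g s + h s) = (\<lambda>s. \<Sum>k\<in>F \<union> G. C k * fourier_mode L k s)"
    unfolding C_def distrib_right sum.distrib by simp
  then show ?thesis unfolding trig_poly_def using F G by blast
qed

lemma trig_poly_sum:
  "finite I \<Longrightarrow> (\<And>i. i \<in> I \<Longrightarrow> trig_poly L (u i)) \<Longrightarrow> trig_poly L (\<lambda>s. \<Sum>i\<in>I. u i s)"
  by (induction I rule: finite_induct) (use trig_poly_const[of L 0] trig_poly_add in auto)

lemma trig_poly_mult:
  assumes "trig_poly L g" "trig_poly L h"
  shows "trig_poly L (\<lambda>s. g s * h s)"
proof -
  obtain F A where F: "finite F" "g = (\<lambda>s. \<Sum>k\<in>F. A k * fourier_mode L k s)"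
    using assms(1) by (rule trig_polyE)
  obtain G B where G: "finite G" "h = (\<lambda>s. \<Sum>k\<in>G. B k * fourier_mode L k s)"
    using assms(2) by (rule trig_polyE)
  have "(\<lambda>s. g s * h s) = (\<lambda>s. \<Sum>j\<in>F. \<Sum>k\<in>G. (A j * B k) * fourier_mode L (j + k) s)"
    unfolding F(2) G(2) sum_product fourier_mode_mult[symmetric] by (simp add: algebra_simps)
  moreover have "trig_poly L \<dots>"
    using F G by (intro trig_poly_sum trig_poly_monomial)
  ultimately show ?thesis by simp
qed

section \<open>Density of trigonometric polynomials\<close>

lemma fourier_mode_1_eq_cases:
  assumes "L > 0" "s \<in> {0..L}" "t \<in> {0..L}" "fourier_mode L 1 s = fourier_mode L 1 t"
  shows "s = t \<or> {s, t} = {0, L}"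
proof -
  obtain m :: int where "2 * pi * \<i> * of_real s / of_real L = 2 * pi * \<i> * of_real t / of_real L + of_int (2 * m) * pi * \<i>"
    using assms(4) unfolding fourier_mode_def exp_eq by auto
  then have "2 * pi * s / L = 2 * pi * t / L + 2 * m * pi"
    by (simp add: complex_eq_iff)
  then have "(2 * pi) * (s - t) = (2 * pi) * (m * L)"
    using assms(1) by (simp add: field_simps)
  then have st: "s - t = m * L" by simp
  have "\<bar>m\<bar> * L = \<bar>s - t\<bar>"
    using st assms(1) by (simp add: abs_mult)
  also have "\<dots> \<le> 1 * L"
    using assms(2,3) by auto
  finally have "\<bar>m\<bar> * L \<le> 1 * L" .
  then have "\<bar>m\<bar> \<le> 1"
    using assms(1) by (simp add: mult_le_cancel_right)
  then have "m = -1 \<or> m = 0 \<or> m = 1" by auto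
  then show ?thesis using st assms(2,3) by auto
qed

lemma periodic_factors_through_circle:
  fixes g :: "real \<Rightarrow> 'a::topological_space"
  assumes L: "L > 0" and g: "continuous_on {0..L} g" "g L = g 0"
  obtains G where "continuous_on (fourier_mode L 1 ` {0..L}) G"
    and "\<And>s. s \<in> {0..L} \<Longrightarrow> G (fourier_mode L 1 s) = g s"
proof -
  let ?p = "fourier_mode L 1"
  define G where "G z = g (SOME s. s \<in> {0..L} \<and> ?p s = z)" for z
  have G: "G (?p s) = g s" if s: "s \<in> {0..L}" for s
  proof -
    define t where "t = (SOME t. t \<in> {0..L} \<and> ?p t = ?p s)"
    have "t \<in> {0..L} \<and> ?p t = ?p s"
      unfolding t_def by (rule someI_ex) (use s in blast)
    then have "t = s \<or> {t, s} = {0, L}"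
      using fourier_mode_1_eq_cases[OF L _ s] by blast
    then show ?thesis
      unfolding G_def t_def[symmetric] using g(2) by (auto simp: doubleton_eq_iff)
  qed
  \<comment> \<open>the interval is compact, so the parametrisation of the circle is a quotient map\<close>
  have "quotient_map (top_of_set {0..L}) (top_of_set (?p ` {0..L})) ?p"
  proof (rule continuous_imp_quotient_map)
    show "continuous_map (top_of_set {0..L}) (top_of_set (?p ` {0..L})) ?p"
      by (simp add: continuous_on_fourier_mode)
  qed (simp_all add: compact_space_subtopology Hausdorff_space_subtopology)
  moreover have "continuous_map (top_of_set {0..L}) euclidean (G \<circ> ?p)"
    using continuous_on_cong[THEN iffD1, OF refl _ g(1)] G by simp
  ultimately have "continuous_map (top_of_set (?p ` {0..L})) euclidean G"
    by (rule continuous_compose_quotient_map)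
  then have "continuous_on (?p ` {0..L}) G" by simp
  then show ?thesis using G that by blast
qed

lemma trig_poly_real_polynomial_function:
  assumes "real_polynomial_function r"
  shows "trig_poly L (\<lambda>s. of_real (r (fourier_mode L 1 s)))"
  using assms
proof induction
  case (linear r)
  interpret bounded_linear r by fact
  have r_eq: "of_real (r w) = (r 1 / 2 - \<i> * r \<i> / 2) * w + (r 1 / 2 + \<i> * r \<i> / 2) * cnj w" for w
  proof -
    have "w = Re w *\<^sub>R 1 + Im w *\<^sub>R \<i>"
      by (simp add: complex_eq_iff)
    then have "r w = r (Re w *\<^sub>R 1 + Im w *\<^sub>R \<i>)"
      by (rule arg_cong)
    also have "\<dots> = Re w * r 1 + Im w * r \<i>"
      by (simp add: add scale)
    finally show ?thesis
      by (simp add: complex_eq_iff algebra_simps)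
  qed
  have "of_real (r (fourier_mode L 1 s)) =
      (r 1 / 2 - \<i> * r \<i> / 2) * fourier_mode L 1 s + (r 1 / 2 + \<i> * r \<i> / 2) * fourier_mode L (- 1) s" for s
    using r_eq[of "fourier_mode L 1 s"] by (simp only: cnj_fourier_mode)
  then show ?case by (simp only: trig_poly_add trig_poly_monomial)
next
  case (const c)
  show ?case by (rule trig_poly_const)
next
  case (add f g)
  show ?case using add.IH unfolding of_real_add by (rule trig_poly_add)
next
  case (mult f g)
  show ?case using mult.IH unfolding of_real_mult by (rule trig_poly_mult)
qed

lemma trig_poly_dense:
  fixes g :: "real \<Rightarrow> complex"
  assumes L: "L > 0" and g: "continuous_on {0..L} g" "g L = g 0" and "e > 0"
  obtains P where "trig_poly L P" "\<And>s. s \<in> {0..L} \<Longrightarrow> norm (g s - P s) < e"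
proof -
  let ?p = "fourier_mode L 1"
  obtain G where G: "continuous_on (?p ` {0..L}) G" "\<And>s. s \<in> {0..L} \<Longrightarrow> G (?p s) = g s"
    using periodic_factors_through_circle[OF L g] by blast
  have "compact (?p ` {0..L})"
    by (intro compact_continuous_image continuous_intros) simp
  then obtain q where q: "polynomial_function q" "\<And>z. z \<in> ?p ` {0..L} \<Longrightarrow> norm (G z - q z) < e"
    using Stone_Weierstrass_polynomial_function[OF _ G(1) \<open>e > 0\<close>] by blast
  have "real_polynomial_function (Re \<circ> q)" "real_polynomial_function (Im \<circ> q)"
    using q(1) unfolding polynomial_function_def by (auto intro: bounded_linear_Re bounded_linear_Im)
  note trig_poly_real_polynomial_function[OF this(1), of L]
    trig_poly_real_polynomial_function[OF this(2), of L]
  from trig_poly_add[OF this(1) trig_poly_mult[OF trig_poly_const[of L \<i>] this(2)]]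
  have "trig_poly L (\<lambda>s. q (?p s))"
    by (simp add: complex_eq[symmetric])
  moreover have "norm (g s - q (?p s)) < e" if "s \<in> {0..L}" for s
    using q(2)[of "?p s"] G(2)[OF that] that by simp
  ultimately show ?thesis by (rule that)
qed

section \<open>Parseval's identity\<close>

text \<open>The paper's \<open>f\<^sup>^(k)\<close> is \<open>fourier_integral L f k / sqrt L\<close>.\<close>
definition fourier_integral :: "real \<Rightarrow> (real \<Rightarrow> complex) \<Rightarrow> int \<Rightarrow> complex" where
  "fourier_integral L g k = integral {0..L} (\<lambda>s. g s * cnj (fourier_mode L k s))"

lemma integrable_mult_cnj_fourier_mode:
  "continuous_on {0..L} g \<Longrightarrow> (\<lambda>s. g s * cnj (fourier_mode L k s)) integrable_on {0..L}"
  by (intro integrable_continuous_interval continuous_intros)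

lemma fourier_integral_add:
  assumes "continuous_on {0..L} g" "continuous_on {0..L} h"
  shows "fourier_integral L (\<lambda>s. g s + h s) k = fourier_integral L g k + fourier_integral L h k"
  unfolding fourier_integral_def distrib_right
  using assms by (intro integral_add integrable_mult_cnj_fourier_mode)

lemma fourier_integral_mult_left:
  "fourier_integral L (\<lambda>s. c * g s) k = c * fourier_integral L g k"
  unfolding fourier_integral_def mult.assoc by simp

lemma fourier_integral_trig_poly:
  assumes "L > 0" "finite F"
  shows "fourier_integral L (\<lambda>s. \<Sum>j\<in>F. A j * fourier_mode L j s) k = (if k \<in> F then L * A k else 0)"
proof -
  have "fourier_integral L (\<lambda>s. \<Sum>j\<in>F. A j * fourier_mode L j s) k =
      (\<Sum>j\<in>F. A j * integral {0..L} (\<lambda>s. fourier_mode L j s * cnj (fourier_mode L k s)))"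
    unfolding fourier_integral_def sum_distrib_right mult.assoc
    by (subst integral_sum) (auto intro!: integrable_continuous_interval continuous_intros assms(2))
  also have "\<dots> = (\<Sum>j\<in>F. if j = k then L * A k else 0)"
    by (intro sum.cong) (simp_all add: integral_fourier_mode_mult_cnj[OF assms(1)])
  finally show ?thesis
    using assms(2) by simp
qed

lemma integral_mult_cnj_trig_poly:
  assumes "continuous_on {0..L} g" "finite F"
  shows "integral {0..L} (\<lambda>s. g s * cnj (\<Sum>j\<in>F. A j * fourier_mode L j s)) =
    (\<Sum>j\<in>F. cnj (A j) * fourier_integral L g j)"
proof -
  have "(\<lambda>s. g s * cnj (\<Sum>j\<in>F. A j * fourier_mode L j s)) =
      (\<lambda>s. \<Sum>j\<in>F. cnj (A j) * (g s * cnj (fourier_mode L j s)))"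
    by (simp add: cnj_sum sum_distrib_left mult.left_commute)
  then show ?thesis
    unfolding fourier_integral_def using assms
    by (simp only: integral_sum integrable_on_mult_right integrable_mult_cnj_fourier_mode integral_mult_right)
qed

lemma norm_diff_square_complex:
  "(norm (x - y))\<^sup>2 = (norm x)\<^sup>2 - 2 * Re (x * cnj y) + (norm (y :: complex))\<^sup>2"
  unfolding cmod_power2 by (simp add: power2_eq_square algebra_simps)

lemma norm_add_square_complex:
  "(norm (x + y))\<^sup>2 = (norm x)\<^sup>2 + 2 * Re (x * cnj y) + (norm (y :: complex))\<^sup>2"
  using norm_diff_square_complex[of x "- y"] by simp

lemma Re_mult_cnj_self: "Re (z * cnj z) = (norm z)\<^sup>2"
  by (simp add: complex_mult_cnj cmod_power2)

lemma integral_Re_continuous: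
  fixes f :: "real \<Rightarrow> complex"
  assumes "continuous_on {a..b} f"
  shows "integral {a..b} (\<lambda>x. Re (f x)) = Re (integral {a..b} f)"
  using has_integral_Re[OF integrable_integral[OF integrable_continuous_interval[OF assms]]]
  by (rule integral_unique)

lemma integral_norm_trig_poly:
  assumes L: "L > 0" and F: "finite F"
  shows "integral {0..L} (\<lambda>s. (norm (\<Sum>k\<in>F. A k * fourier_mode L k s))\<^sup>2) = L * (\<Sum>k\<in>F. (norm (A k))\<^sup>2)"
proof -
  define P where "P s = (\<Sum>k\<in>F. A k * fourier_mode L k s)" for s
  have P: "continuous_on {0..L} P"
    unfolding P_def by (intro continuous_intros)
  have "integral {0..L} (\<lambda>s. (norm (P s))\<^sup>2) = Re (integral {0..L} (\<lambda>s. P s * cnj (P s)))"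
    unfolding Re_mult_cnj_self[symmetric] using P by (intro integral_Re_continuous continuous_intros)
  also have "\<dots> = Re (\<Sum>k\<in>F. cnj (A k) * (L * A k))"
    unfolding P_def integral_mult_cnj_trig_poly[OF P[unfolded P_def] F]
      fourier_integral_trig_poly[OF L F] using F by simp
  also have "\<dots> = L * (\<Sum>k\<in>F. (norm (A k))\<^sup>2)"
    by (simp add: Re_sum sum_distrib_left Re_mult_cnj_self[of "A _", symmetric] mult.left_commute)
  finally show ?thesis unfolding P_def .
qed

lemma integral_norm_diff_trig_poly:
  assumes L: "L > 0" and g: "continuous_on {0..L} g" and F: "finite F"
  shows "integral {0..L} (\<lambda>s. (norm (g s - (\<Sum>k\<in>F. A k * fourier_mode L k s)))\<^sup>2) =
    integral {0..L} (\<lambda>s. (norm (g s))\<^sup>2) - (\<Sum>k\<in>F. (norm (fourier_integral L g k))\<^sup>2) / L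
    + L * (\<Sum>k\<in>F. (norm (A k - fourier_integral L g k / L))\<^sup>2)"
proof -
  define P where "P s = (\<Sum>k\<in>F. A k * fourier_mode L k s)" for s
  define c where "c = fourier_integral L g"
  have P: "continuous_on {0..L} P"
    unfolding P_def by (intro continuous_intros)
  have gP: "integral {0..L} (\<lambda>s. Re (g s * cnj (P s))) = (\<Sum>k\<in>F. Re (cnj (A k) * c k))"
  proof -
    have "integral {0..L} (\<lambda>s. Re (g s * cnj (P s))) = Re (integral {0..L} (\<lambda>s. g s * cnj (P s)))"
      using g P by (intro integral_Re_continuous continuous_intros)
    also have "\<dots> = Re (\<Sum>k\<in>F. cnj (A k) * c k)"
      unfolding P_def c_def integral_mult_cnj_trig_poly[OF g F] ..
    finally show ?thesis by (simp add: Re_sum)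
  qed
  have PP: "integral {0..L} (\<lambda>s. (norm (P s))\<^sup>2) = L * (\<Sum>k\<in>F. (norm (A k))\<^sup>2)"
    unfolding P_def by (rule integral_norm_trig_poly[OF L F])
  have "integral {0..L} (\<lambda>s. (norm (g s - P s))\<^sup>2) =
      integral {0..L} (\<lambda>s. (norm (g s))\<^sup>2) - 2 * integral {0..L} (\<lambda>s. Re (g s * cnj (P s)))
      + integral {0..L} (\<lambda>s. (norm (P s))\<^sup>2)"
  proof -
    have "(\<lambda>s. (norm (g s))\<^sup>2) integrable_on {0..L}" "(\<lambda>s. (norm (P s))\<^sup>2) integrable_on {0..L}"
      "(\<lambda>s. 2 * Re (g s * cnj (P s))) integrable_on {0..L}"
      by (intro integrable_continuous_interval continuous_intros g P)+
    then show ?thesis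
      unfolding norm_diff_square_complex
      by (simp only: integral_add integral_diff integrable_diff integral_mult_right)
  qed
  also have "\<dots> = integral {0..L} (\<lambda>s. (norm (g s))\<^sup>2) - (\<Sum>k\<in>F. (norm (c k))\<^sup>2) / L
    + L * (\<Sum>k\<in>F. (norm (A k - c k / L))\<^sup>2)"
  proof -
    have "L * (norm (A k - c k / L))\<^sup>2 = L * (norm (A k))\<^sup>2 - 2 * Re (cnj (A k) * c k) + (norm (c k))\<^sup>2 / L" for k
      unfolding norm_diff_square_complex using L
      by (simp add: field_simps norm_divide power_divide power2_eq_square)
    then have "L * (\<Sum>k\<in>F. (norm (A k - c k / L))\<^sup>2) =
        L * (\<Sum>k\<in>F. (norm (A k))\<^sup>2) - 2 * (\<Sum>k\<in>F. Re (cnj (A k) * c k)) + (\<Sum>k\<in>F. (norm (c k))\<^sup>2) / L"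
      by (simp add: sum_distrib_left sum.distrib sum_subtractf sum_divide_distrib)
    then show ?thesis unfolding gP PP by simp
  qed
  finally show ?thesis unfolding P_def c_def .
qed

lemma has_sum_nonneg_supI:
  fixes f :: "'a \<Rightarrow> real"
  assumes nonneg: "\<And>x. f x \<ge> 0" and bound: "\<And>F. finite F \<Longrightarrow> sum f F \<le> S"
    and approx: "\<And>e. e > 0 \<Longrightarrow> \<exists>F. finite F \<and> sum f F > S - e"
  shows "(f has_sum S) UNIV"
  unfolding has_sum_def
proof (rule order_tendstoI)
  fix a assume "a < S"
  then obtain F0 where F0: "finite F0" "sum f F0 > a"
    using approx[of "S - a"] by auto
  have "a < sum f F" if "finite F" "F0 \<subseteq> F" for F
  proof -
    have "sum f F0 \<le> sum f F" by (rule sum_mono2[OF that]) (rule nonneg)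
    then show ?thesis using F0(2) by linarith
  qed
  then show "\<forall>\<^sub>F F in finite_subsets_at_top UNIV. a < sum f F"
    unfolding eventually_finite_subsets_at_top using F0(1) by blast
next
  fix a assume "a > S"
  then show "\<forall>\<^sub>F F in finite_subsets_at_top UNIV. sum f F < a"
    using bound by (intro eventually_finite_subsets_at_top_weakI) (metis le_less_trans)
qed

lemma has_sum_diff:
  fixes f g :: "'a \<Rightarrow> 'b::topological_ab_group_add"
  assumes "(f has_sum a) A" "(g has_sum b) A"
  shows "((\<lambda>x. f x - g x) has_sum (a - b)) A"
proof -
  have "((\<lambda>x. - g x) has_sum - b) A"
    using assms(2) by (simp add: has_sum_uminus)
  from has_sum_add[OF assms(1) this] show ?thesis by simp
qed

theorem parseval:
  fixes g :: "real \<Rightarrow> complex"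
  assumes L: "L > 0" and g: "continuous_on {0..L} g" "g L = g 0"
  shows "((\<lambda>k. (norm (fourier_integral L g k))\<^sup>2 / L) has_sum integral {0..L} (\<lambda>s. (norm (g s))\<^sup>2)) UNIV"
proof (rule has_sum_nonneg_supI)
  let ?N = "integral {0..L} (\<lambda>s. (norm (g s))\<^sup>2)"
  let ?c = "fourier_integral L g"
  have dist_nonneg: "integral {0..L} (\<lambda>s. (norm (g s - P s))\<^sup>2) \<ge> 0" if "trig_poly L P" for P
    using that by (auto elim!: trig_polyE intro!: integral_nonneg integrable_continuous_interval continuous_intros g(1))
  show "(norm (?c k))\<^sup>2 / L \<ge> 0" for k
    using L by simp
  show "(\<Sum>k\<in>F. (norm (?c k))\<^sup>2 / L) \<le> ?N" if F: "finite F" for F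
  proof -
    have "trig_poly L (\<lambda>s. \<Sum>k\<in>F. ?c k / L * fourier_mode L k s)"
      using F by (intro trig_poly_sum trig_poly_monomial)
    from dist_nonneg[OF this] show ?thesis
      unfolding integral_norm_diff_trig_poly[OF L g(1) F] by (simp add: sum_divide_distrib)
  qed
  show "\<exists>F. finite F \<and> (\<Sum>k\<in>F. (norm (?c k))\<^sup>2 / L) > ?N - e" if e: "e > 0" for e
  proof -
    define d where "d = sqrt (e / (2 * L))"
    have "d > 0" "L * d\<^sup>2 < e"
      using e L unfolding d_def by (simp_all add: field_simps)
    then obtain P where P: "trig_poly L P" "\<And>s. s \<in> {0..L} \<Longrightarrow> norm (g s - P s) < d"
      using trig_poly_dense[OF L g] by blast
    obtain F A where F: "finite F" "P = (\<lambda>s. \<Sum>k\<in>F. A k * fourier_mode L k s)"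
      using P(1) by (rule trig_polyE)
    have "integral {0..L} (\<lambda>s. (norm (g s - P s))\<^sup>2) \<le> integral {0..L} (\<lambda>s. d\<^sup>2)"
      using P(2) unfolding F(2)
      by (intro integral_le integrable_continuous_interval continuous_intros g(1) power_mono)
        (auto intro: less_imp_le)
    also have "\<dots> = L * d\<^sup>2"
      using L by simp
    finally have "integral {0..L} (\<lambda>s. (norm (g s - P s))\<^sup>2) < e"
      using \<open>L * d\<^sup>2 < e\<close> by linarith
    moreover have "L * (\<Sum>k\<in>F. (norm (A k - ?c k / L))\<^sup>2) \<ge> 0"
      using L by (intro mult_nonneg_nonneg sum_nonneg) auto
    ultimately have "?N - (\<Sum>k\<in>F. (norm (?c k))\<^sup>2) / L < e"
      unfolding F(2) integral_norm_diff_trig_poly[OF L g(1) F(1)] by linarith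
    then show ?thesis
      using F(1) by (auto simp: sum_divide_distrib)
  qed
qed

theorem parseval_inner:
  fixes a b :: "real \<Rightarrow> complex"
  assumes L: "L > 0" and a: "continuous_on {0..L} a" "a L = a 0"
    and b: "continuous_on {0..L} b" "b L = b 0"
  shows "((\<lambda>k. Re (fourier_integral L a k * cnj (fourier_integral L b k)) / L)
    has_sum integral {0..L} (\<lambda>s. Re (a s * cnj (b s)))) UNIV"
proof -
  have ab: "continuous_on {0..L} (\<lambda>s. a s + b s)"
    using a b by (intro continuous_intros)
  have "((\<lambda>k. ((norm (fourier_integral L (\<lambda>s. a s + b s) k))\<^sup>2 / L - (norm (fourier_integral L a k))\<^sup>2 / L
        - (norm (fourier_integral L b k))\<^sup>2 / L) / 2) has_sum
      (integral {0..L} (\<lambda>s. (norm (a s + b s))\<^sup>2) - integral {0..L} (\<lambda>s. (norm (a s))\<^sup>2)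
        - integral {0..L} (\<lambda>s. (norm (b s))\<^sup>2)) / 2) UNIV"
    using parseval[OF L ab] parseval[OF L a] parseval[OF L b] a(2) b(2)
    by (intro has_sum_divide_const has_sum_diff) simp_all
  moreover have "((norm (fourier_integral L (\<lambda>s. a s + b s) k))\<^sup>2 / L - (norm (fourier_integral L a k))\<^sup>2 / L
        - (norm (fourier_integral L b k))\<^sup>2 / L) / 2
      = Re (fourier_integral L a k * cnj (fourier_integral L b k)) / L" for k
    unfolding fourier_integral_add[OF a(1) b(1)] norm_add_square_complex using L by (simp add: field_simps)
  moreover have "(integral {0..L} (\<lambda>s. (norm (a s + b s))\<^sup>2) - integral {0..L} (\<lambda>s. (norm (a s))\<^sup>2)
        - integral {0..L} (\<lambda>s. (norm (b s))\<^sup>2)) / 2 = integral {0..L} (\<lambda>s. Re (a s * cnj (b s)))"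
  proof -
    have "(\<lambda>s. (norm (a s))\<^sup>2) integrable_on {0..L}" "(\<lambda>s. (norm (b s))\<^sup>2) integrable_on {0..L}"
      "(\<lambda>s. 2 * Re (a s * cnj (b s))) integrable_on {0..L}"
      by (intro integrable_continuous_interval continuous_intros a(1) b(1))+
    then show ?thesis
      unfolding norm_add_square_complex
      by (simp only: integral_add integrable_add integral_mult_right) simp
  qed
  ultimately show ?thesis by simp
qed

lemma fourier_integral_deriv:
  fixes g g' :: "real \<Rightarrow> complex"
  assumes L: "L > 0" and g: "\<And>s. (g has_vector_derivative g' s) (at s)" "g L = g 0"
    and g': "continuous_on {0..L} g'"
  shows "fourier_integral L g' k = (2 * pi * \<i> * of_int k / of_real L) * fourier_integral L g k"
proof -
  define c where "c = 2 * pi * \<i> * of_int k / of_real L"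
  have "continuous_on {0..L} g"
    using g(1) by (blast intro: continuous_on_vector_derivative has_vector_derivative_at_within)
  then have int: "(\<lambda>s. g s * cnj (fourier_mode L k s)) integrable_on {0..L}"
    "(\<lambda>s. g' s * cnj (fourier_mode L k s)) integrable_on {0..L}"
    using g' by (simp_all add: integrable_mult_cnj_fourier_mode)
  have "((\<lambda>s. cnj c * (g s * cnj (fourier_mode L k s)) + g' s * cnj (fourier_mode L k s)) has_integral
        (g L * cnj (fourier_mode L k L) - g 0 * cnj (fourier_mode L k 0))) {0..L}"
  proof (rule fundamental_theorem_of_calculus)
    fix x
    have "((\<lambda>s. cnj (fourier_mode L k s)) has_vector_derivative cnj (c * fourier_mode L k x)) (at x within {0..L})"
      unfolding c_def by (intro has_vector_derivative_cnj has_vector_derivative_fourier_mode)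
    from has_vector_derivative_mult[OF has_vector_derivative_at_within[OF g(1)] this]
    show "((\<lambda>s. g s * cnj (fourier_mode L k s)) has_vector_derivative
        cnj c * (g x * cnj (fourier_mode L k x)) + g' x * cnj (fourier_mode L k x)) (at x within {0..L})"
      by (simp add: algebra_simps)
  qed (use L in simp)
  moreover have "((\<lambda>s. cnj c * (g s * cnj (fourier_mode L k s)) + g' s * cnj (fourier_mode L k s)) has_integral
        (cnj c * fourier_integral L g k + fourier_integral L g' k)) {0..L}"
    unfolding fourier_integral_def by (intro has_integral_add has_integral_mult_right integrable_integral int)
  ultimately have "cnj c * fourier_integral L g k + fourier_integral L g' k = 0"
    using g(2) L by (simp add: has_integral_unique)
  moreover have "cnj c = - c"
    unfolding c_def by (simp add: complex_eq_iff)
  ultimately show ?thesis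
    unfolding c_def by (simp add: add_eq_0_iff)
qed

section \<open>Periodic functions and a linear ODE\<close>

lemma vderiv_periodic:
  assumes per: "\<And>s. g (s + L) = g s" and "g differentiable (at (s + L))"
  shows "vderiv g (s + L) = vderiv g s"
proof -
  have "(g has_vector_derivative vderiv g (s + L)) (at (s + L))"
    using assms(2) unfolding vderiv_def by (simp add: vector_derivative_works)
  moreover have "((\<lambda>x. x + L) has_vector_derivative 1) (at s)"
    by (auto intro!: derivative_eq_intros)
  ultimately have "((g \<circ> (\<lambda>x. x + L)) has_vector_derivative vderiv g (s + L)) (at s)"
    using vector_diff_chain_at by fastforce
  moreover have "g \<circ> (\<lambda>x. x + L) = g"
    using per by (auto simp: fun_eq_iff)
  ultimately show ?thesis
    unfolding vderiv_def by (simp add: vector_derivative_at)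
qed

lemma periodic_shift_int:
  fixes h :: "real \<Rightarrow> 'a"
  assumes "\<And>s. h (s + L) = h s"
  shows "h (s + of_int m * L) = h s"
proof (induction m arbitrary: s rule: int_induct[where k = 0])
  case (step1 i)
  then show ?case using assms[of "s + of_int i * L"] by (simp add: algebra_simps)
next
  case (step2 i)
  then show ?case using assms[of "s + of_int (i - 1) * L"] by (simp add: algebra_simps)
qed simp

lemma range_periodic:
  fixes h :: "real \<Rightarrow> 'a"
  assumes L: "L > 0" and per: "\<And>s. h (s + L) = h s"
  shows "range h = h ` {0..L}"
proof -
  have "h s \<in> h ` {0..L}" for s
  proof
    define m where "m = \<lfloor>s / L\<rfloor>"
    have "of_int m \<le> s / L" "s / L < of_int m + 1"
      using floor_correct[of "s / L"] unfolding m_def by auto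
    then have "of_int m * L \<le> s" "s < (of_int m + 1) * L"
      using L by (simp_all add: field_simps)
    then show "s - of_int m * L \<in> {0..L}" by (simp add: algebra_simps)
    show "h s = h (s - of_int m * L)"
      using periodic_shift_int[of h L "s - of_int m * L" m, OF per] by simp
  qed
  then show ?thesis by blast
qed

lemma has_vector_derivative_zero_imp_const:
  assumes "\<And>x. (f has_vector_derivative 0) (at x)"
  shows "f x = f y"
proof -
  obtain c where "\<And>x. x \<in> UNIV \<Longrightarrow> f x = c"
    by (rule has_vector_derivative_zero_constant[of UNIV f]) (use assms in auto)
  then show ?thesis by simp
qed

lemma exp_solution_of_linear_ode:
  fixes g :: "real \<Rightarrow> complex"
  assumes g: "\<And>x. (g has_vector_derivative g' x) (at x)"
    and g': "\<And>x. (g' has_vector_derivative a * g' x) (at x)" and "a \<noteq> 0"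
  shows "g s = (g 0 - g' 0 / a) + g' 0 / a * exp (a * of_real s)"
proof -
  have exp: "((\<lambda>x. exp (b * of_real x)) has_vector_derivative b * exp (b * of_real x)) (at x)"
    for b :: complex and x :: real
    by (rule has_vector_derivative_real_field) (auto intro!: derivative_eq_intros)
  have "((\<lambda>x. g' x * exp (- a * of_real x)) has_vector_derivative 0) (at x)" for x
    using has_vector_derivative_mult[OF g' exp[of "- a" x]] by (simp add: algebra_simps)
  then have g'_const: "g' x * exp (- a * of_real x) = g' 0 * exp (- a * of_real 0)" for x
    by (rule has_vector_derivative_zero_imp_const)
  have g'_eq: "g' x = g' 0 * exp (a * of_real x)" for x
  proof -
    have "g' x = (g' x * exp (- a * of_real x)) * exp (a * of_real x)"
      by (simp add: mult.assoc exp_add[symmetric])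
    also have "\<dots> = g' 0 * exp (a * of_real x)"
      unfolding g'_const[of x] by simp
    finally show ?thesis .
  qed
  have "((\<lambda>x. g x - g' 0 / a * exp (a * of_real x)) has_vector_derivative 0) (at x)" for x
  proof -
    have "((\<lambda>x. g x - g' 0 / a * exp (a * of_real x)) has_vector_derivative
        g' x - g' 0 / a * (a * exp (a * of_real x))) (at x)"
      by (intro has_vector_derivative_diff has_vector_derivative_mult_right g exp)
    then show ?thesis using \<open>a \<noteq> 0\<close> g'_eq[of x] by simp
  qed
  then have "g x - g' 0 / a * exp (a * of_real x) = g 0 - g' 0 / a * exp (a * of_real 0)" for x
    by (rule has_vector_derivative_zero_imp_const)
  then show ?thesis by (simp add: algebra_simps)
qed

lemma unimodular_derivative_eq:
  fixes u :: "real \<Rightarrow> complex"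
  assumes u: "\<And>x. norm (u x) = 1" and d: "(u has_vector_derivative u') (at s)"
  shows "u' = \<i> * of_real (Im (u' * cnj (u s))) * u s"
proof -
  have unit: "u x * cnj (u x) = 1" for x
    using u[of x] complex_norm_square[of "u x"] by simp
  have "((\<lambda>x. u x * cnj (u x)) has_vector_derivative u s * cnj u' + u' * cnj (u s)) (at s)"
    using has_vector_derivative_mult[OF d has_vector_derivative_cnj[OF d]] by simp
  moreover have "((\<lambda>x. u x * cnj (u x)) has_vector_derivative 0) (at s)"
    unfolding unit by (rule has_vector_derivative_const)
  ultimately have "u s * cnj u' + u' * cnj (u s) = 0"
    using vector_derivative_unique_at by blast
  then have "Re (u s * cnj u' + u' * cnj (u s)) = 0"
    by simp
  then have "Re (u' * cnj (u s)) = 0"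
    by (simp add: algebra_simps)
  then have "u' * cnj (u s) = \<i> * of_real (Im (u' * cnj (u s)))"
    by (simp add: complex_eq_iff)
  moreover have "(u' * cnj (u s)) * u s = u' * (u s * cnj (u s))"
    by (simp only: mult.assoc mult.commute[of "cnj (u s)" "u s"])
  then have "u' = (u' * cnj (u s)) * u s"
    using unit[of s] by simp
  ultimately show ?thesis
    by simp
qed

section \<open>Closed unit-speed curves\<close>

lemma is_n_fold_circle_iff:
  assumes "L > 0" "n \<noteq> 0"
  shows "is_n_fold_circle f L n \<longleftrightarrow> (\<exists>c w. w \<noteq> 0 \<and> (\<forall>s. f s = c + w * fourier_mode L n s))"
proof
  assume "is_n_fold_circle f L n"
  then obtain c r \<sigma> where "r > 0"
    and f: "\<And>s. f s = c + of_real r * exp (2 * pi * \<i> * of_int n * of_real (s + \<sigma>) / of_real L)"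
    unfolding is_n_fold_circle_def by blast
  have "exp (2 * pi * \<i> * of_int n * of_real (s + \<sigma>) / of_real L) = fourier_mode L n \<sigma> * fourier_mode L n s"
    for s unfolding fourier_mode_def exp_add[symmetric] by (simp add: algebra_simps add_divide_distrib)
  then have "f s = c + (of_real r * fourier_mode L n \<sigma>) * fourier_mode L n s" for s
    unfolding f by (simp add: mult.assoc)
  then show "\<exists>c w. w \<noteq> 0 \<and> (\<forall>s. f s = c + w * fourier_mode L n s)"
    using \<open>r > 0\<close> by (intro exI[of _ c] exI[of _ "of_real r * fourier_mode L n \<sigma>"]) (simp add: fourier_mode_def)
next
  assume "\<exists>c w. w \<noteq> 0 \<and> (\<forall>s. f s = c + w * fourier_mode L n s)"
  then obtain c w where "w \<noteq> 0" and f: "\<And>s. f s = c + w * fourier_mode L n s"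
    by blast
  define \<sigma> where "\<sigma> = Arg w * L / (2 * pi * n)"
  have "f s = c + of_real (norm w) * exp (2 * pi * \<i> * of_int n * of_real (s + \<sigma>) / of_real L)" for s
  proof -
    have "2 * pi * \<i> * of_int n * of_real (s + \<sigma>) / of_real L =
        \<i> * of_real (Arg w) + 2 * pi * \<i> * of_int n * of_real s / of_real L"
      unfolding \<sigma>_def using assms by (simp add: field_simps)
    then show ?thesis
      unfolding f fourier_mode_def using Arg_eq[OF \<open>w \<noteq> 0\<close>] by (simp add: exp_add mult.assoc)
  qed
  then show "is_n_fold_circle f L n"
    unfolding is_n_fold_circle_def using \<open>w \<noteq> 0\<close> by (intro exI[of _ c] exI[of _ "norm w"] exI[of _ \<sigma>]) simp
qed

locale closed_unit_speed_curve =
  fixes f :: "real \<Rightarrow> complex" and L :: real and n :: int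
  assumes closed: "closed_arclength_curve f L"
    and rotation: "rotation_number f L = of_int n"
begin

abbreviation "f' \<equiv> vderiv f"
abbreviation "f'' \<equiv> vderiv (vderiv f)"

lemma L_pos: "L > 0"
  using closed unfolding closed_arclength_curve_def by simp

lemma periodic: "f (s + L) = f s"
  using closed unfolding closed_arclength_curve_def by simp

lemma norm_f': "norm (f' s) = 1"
  using closed unfolding closed_arclength_curve_def by simp

lemma differentiable_vderiv_iterate: "(vderiv ^^ k) f differentiable (at x)"
  using closed unfolding closed_arclength_curve_def smooth_curve_def by simp

lemma has_vector_derivative_f: "(f has_vector_derivative f' x) (at x)"
  using differentiable_vderiv_iterate[of 0 x] unfolding vderiv_def by (simp add: vector_derivative_works)

lemma has_vector_derivative_f': "(f' has_vector_derivative f'' x) (at x)"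
  using differentiable_vderiv_iterate[of 1 x] unfolding vderiv_def by (simp add: vector_derivative_works)

lemma continuous_on_f': "continuous_on S f'"
  using has_vector_derivative_f' by (blast intro: continuous_on_vector_derivative has_vector_derivative_at_within)

lemma continuous_on_f'': "continuous_on S f''"
  using differentiable_vderiv_iterate[of 2] by (auto simp: numeral_2_eq_2 continuous_at_imp_continuous_on
    differentiable_imp_continuous_within)

lemma periodic_f': "f' (s + L) = f' s"
  using vderiv_periodic[of f L s] periodic differentiable_vderiv_iterate[of 0 "s + L"] by simp

lemma periodic_f'': "f'' (s + L) = f'' s"
  using vderiv_periodic[of f' L s] periodic_f' differentiable_vderiv_iterate[of 1 "s + L"] by simp

lemma curvature_eq: "curvature f s = Im (f'' s * cnj (f' s))"
  unfolding curvature_def cdot_def normal_def tangent_def by simp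

lemma frenet: "f'' s = \<i> * of_real (curvature f s) * f' s"
  unfolding curvature_eq by (rule unimodular_derivative_eq[OF norm_f' has_vector_derivative_f'])

lemma continuous_on_curvature: "continuous_on S (curvature f)"
  unfolding curvature_eq[abs_def] by (intro continuous_intros continuous_on_f' continuous_on_f'')

lemma periodic_curvature: "curvature f (s + L) = curvature f s"
  unfolding curvature_eq periodic_f' periodic_f'' ..

lemma integral_curvature: "integral {0..L} (curvature f) = 2 * pi * n"
  using rotation unfolding rotation_number_def by (simp add: field_simps)

lemma osc_curvature_eq: "osc_curvature f L s = curvature f s - 2 * pi * n / L"
  unfolding osc_curvature_def integral_curvature by simp

lemma continuous_on_osc_curvature: "continuous_on S (osc_curvature f L)"
  unfolding osc_curvature_eq[abs_def] by (intro continuous_intros continuous_on_curvature)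

definition curvature_defect :: "real \<Rightarrow> complex" where
  "curvature_defect s = f'' s - \<i> * of_real (2 * pi * n / L) * f' s"

lemma curvature_defect_eq: "curvature_defect s = \<i> * of_real (osc_curvature f L s) * f' s"
  unfolding curvature_defect_def osc_curvature_eq frenet[of s] by (simp add: algebra_simps)

lemma continuous_on_curvature_defect: "continuous_on S curvature_defect"
  unfolding curvature_defect_def[abs_def] by (intro continuous_intros continuous_on_f' continuous_on_f'')

lemma periodic_curvature_defect: "curvature_defect L = curvature_defect 0"
  unfolding curvature_defect_def using periodic_f'[of 0] periodic_f''[of 0] by simp

lemma I0_eq_integral_curvature_defect: "I0 f L = L * integral {0..L} (\<lambda>s. (norm (curvature_defect s))\<^sup>2)"
  unfolding I0_def curvature_defect_eq by (simp add: norm_mult norm_f')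

lemma fourier_integral_f': "fourier_integral L f' k = (2 * pi * \<i> * of_int k / of_real L) * fourier_integral L f k"
  using periodic[of 0] by (intro fourier_integral_deriv L_pos has_vector_derivative_f continuous_on_f') simp

lemma fourier_integral_f'': "fourier_integral L f'' k = (2 * pi * \<i> * of_int k / of_real L) * fourier_integral L f' k"
  using periodic_f'[of 0] by (intro fourier_integral_deriv L_pos has_vector_derivative_f' continuous_on_f'') simp

lemma fourier_integral_curvature_defect:
  "fourier_integral L curvature_defect k = of_real (- (2 * pi / L)\<^sup>2 * k * (k - n)) * fourier_integral L f k"
proof -
  let ?c = "- \<i> * of_real (2 * pi * n / L)"
  have "curvature_defect = (\<lambda>s. f'' s + ?c * f' s)"
    by (simp add: curvature_defect_def fun_eq_iff)
  moreover have "continuous_on {0..L} (\<lambda>s. ?c * f' s)"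
    by (intro continuous_intros continuous_on_f')
  ultimately have "fourier_integral L curvature_defect k = fourier_integral L f'' k + ?c * fourier_integral L f' k"
    by (simp only: fourier_integral_add[OF continuous_on_f''] fourier_integral_mult_left)
  also have "\<dots> = of_real (- (2 * pi / L)\<^sup>2 * k * (k - n)) * fourier_integral L f k"
    unfolding fourier_integral_f'' fourier_integral_f' using L_pos
    by (simp add: field_simps power2_eq_square complex_eq_iff)
  finally show ?thesis .
qed

lemma norm_fourier_integral_eq: "(norm (fourier_integral L f k))\<^sup>2 = L * (norm (fourier_coeff f L k))\<^sup>2"
proof -
  have "fourier_coeff f L k = of_real (1 / sqrt L) * fourier_integral L f k"
    unfolding fourier_coeff_def fourier_integral_def cnj_fourier_mode
    by (simp add: fourier_mode_def)
  then show ?thesis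
    using L_pos by (simp add: norm_divide power_divide)
qed

lemma has_sum_square_weights:
  "((\<lambda>k. 16 * pi ^ 4 / L ^ 3 * (of_int k ^ 2 * (of_int (k - n))\<^sup>2 * (norm (fourier_coeff f L k))\<^sup>2))
     has_sum I0 f L) UNIV"
proof -
  have "((\<lambda>k. L * ((norm (fourier_integral L curvature_defect k))\<^sup>2 / L)) has_sum I0 f L) UNIV"
    unfolding I0_eq_integral_curvature_defect
    by (intro has_sum_cmult_right parseval L_pos continuous_on_curvature_defect periodic_curvature_defect)
  moreover have "L * ((norm (fourier_integral L curvature_defect k))\<^sup>2 / L) =
      16 * pi ^ 4 / L ^ 3 * (of_int k ^ 2 * (of_int (k - n))\<^sup>2 * (norm (fourier_coeff f L k))\<^sup>2)" for k
    unfolding fourier_integral_curvature_defect norm_mult norm_of_real power_mult_distrib power2_abs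
      norm_fourier_integral_eq using L_pos by (simp add: field_simps eval_nat_numeral)
  ultimately show ?thesis by simp
qed

lemma has_sum_cross_weights:
  "((\<lambda>k. (2 * pi / L) ^ 3 * of_int k ^ 2 * of_int (k - n) * (norm (fourier_coeff f L k))\<^sup>2) has_sum 0) UNIV"
proof -
  have normal: "normal f = (\<lambda>s. \<i> * f' s)"
    unfolding normal_def tangent_def by (simp add: fun_eq_iff)
  have "continuous_on {0..L} (normal f)" "normal f L = normal f 0"
    unfolding normal using periodic_f'[of 0] by (auto intro: continuous_intros continuous_on_f')
  note inner = parseval_inner[OF L_pos continuous_on_curvature_defect periodic_curvature_defect this]
  have "Re (fourier_integral L curvature_defect k * cnj (fourier_integral L (normal f) k)) / L =
      (2 * pi / L) ^ 3 * of_int k ^ 2 * of_int (k - n) * (norm (fourier_coeff f L k))\<^sup>2" for k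
  proof -
    define C where "C = fourier_integral L f k"
    have "fourier_integral L (normal f) k = of_real (- 2 * pi * k / L) * C"
      unfolding normal fourier_integral_mult_left fourier_integral_f' C_def using L_pos
      by (simp add: field_simps complex_eq_iff)
    then have "fourier_integral L curvature_defect k * cnj (fourier_integral L (normal f) k) =
        of_real ((- (2 * pi / L)\<^sup>2 * k * (k - n)) * (- 2 * pi * k / L)) * (C * cnj C)"
      unfolding fourier_integral_curvature_defect C_def[symmetric] by (simp add: algebra_simps)
    also have "\<dots> = of_real ((- (2 * pi / L)\<^sup>2 * k * (k - n)) * (- 2 * pi * k / L) * (norm C)\<^sup>2)"
      unfolding complex_norm_square[symmetric] by simp
    finally have "Re (fourier_integral L curvature_defect k * cnj (fourier_integral L (normal f) k)) =
        (- (2 * pi / L)\<^sup>2 * k * (k - n)) * (- 2 * pi * k / L) * (L * (norm (fourier_coeff f L k))\<^sup>2)"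
      unfolding C_def norm_fourier_integral_eq by (simp only: Re_complex_of_real)
    then show ?thesis
      using L_pos by (simp add: field_simps eval_nat_numeral)
  qed
  moreover have "integral {0..L} (\<lambda>s. Re (curvature_defect s * cnj (normal f s))) = 0"
  proof -
    have "Re (curvature_defect s * cnj (normal f s)) = curvature f s - 2 * pi * n / L" for s
      unfolding curvature_defect_eq normal osc_curvature_eq
      using Re_mult_cnj_self[of "f' s"] by (simp add: norm_f' mult.assoc)
    then show ?thesis
      using L_pos integral_curvature
      by (simp add: integral_diff integrable_continuous_interval continuous_on_curvature)
  qed
  ultimately show ?thesis using inner by simp
qed

lemma has_sum_cubic_weights:
  "((\<lambda>k. 16 * pi ^ 4 / L ^ 3 * (of_int k ^ 3 * of_int (k - n) * (norm (fourier_coeff f L k))\<^sup>2))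
     has_sum I0 f L) UNIV"
proof -
  have "((\<lambda>k. 16 * pi ^ 4 / L ^ 3 * (of_int k ^ 2 * (of_int (k - n))\<^sup>2 * (norm (fourier_coeff f L k))\<^sup>2)
      + (2 * pi / L) ^ 3 * of_int k ^ 2 * of_int (k - n) * (norm (fourier_coeff f L k))\<^sup>2 * (2 * pi * n))
      has_sum (I0 f L + 0 * (2 * pi * n))) UNIV"
    by (intro has_sum_add has_sum_square_weights has_sum_cmult_left has_sum_cross_weights)
  moreover have "16 * pi ^ 4 / L ^ 3 * (of_int k ^ 2 * (of_int (k - n))\<^sup>2 * (norm (fourier_coeff f L k))\<^sup>2)
      + (2 * pi / L) ^ 3 * of_int k ^ 2 * of_int (k - n) * (norm (fourier_coeff f L k))\<^sup>2 * (2 * pi * n) =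
      16 * pi ^ 4 / L ^ 3 * (of_int k ^ 3 * of_int (k - n) * (norm (fourier_coeff f L k))\<^sup>2)" for k
    using L_pos by (simp add: field_simps eval_nat_numeral)
  ultimately show ?thesis by simp
qed

lemma I0_nonneg: "I0 f L \<ge> 0"
  unfolding I0_def using L_pos
  by (intro mult_nonneg_nonneg integral_nonneg integrable_continuous_interval continuous_intros
      continuous_on_osc_curvature) auto

lemma I0_eq_0_iff_constant_curvature: "I0 f L = 0 \<longleftrightarrow> (\<forall>s. curvature f s = 2 * pi * n / L)"
proof
  assume "I0 f L = 0"
  then have "integral {0..L} (\<lambda>s. (osc_curvature f L s)\<^sup>2) = 0"
    using L_pos unfolding I0_def by simp
  moreover have cont: "continuous_on {0..L} (\<lambda>s. (osc_curvature f L s)\<^sup>2)"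
    by (intro continuous_intros continuous_on_osc_curvature)
  ultimately have "((\<lambda>s. (osc_curvature f L s)\<^sup>2) has_integral 0) (cbox 0 L)"
    using integrable_continuous_interval[OF cont] by (metis cbox_interval integrable_integral)
  then have "(osc_curvature f L s)\<^sup>2 = 0" if "s \<in> {0..L}" for s
    using cont that L_pos by (intro has_integral_0_cbox_imp_0[of 0 L]) auto
  then have "osc_curvature f L ` {0..L} \<subseteq> {0}"
    by auto
  moreover have "range (osc_curvature f L) = osc_curvature f L ` {0..L}"
    using L_pos by (rule range_periodic) (simp add: osc_curvature_eq periodic_curvature)
  ultimately have "osc_curvature f L s = 0" for s
    by blast
  then show "\<forall>s. curvature f s = 2 * pi * n / L"
    unfolding osc_curvature_eq by simp
next
  assume "\<forall>s. curvature f s = 2 * pi * n / L"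
  then show "I0 f L = 0"
    unfolding I0_def osc_curvature_eq by simp
qed

lemma constant_curvature_iff:
  "(\<forall>s. curvature f s = 2 * pi * n / L) \<longleftrightarrow> (\<forall>s. f'' s = (2 * pi * \<i> * of_int n / of_real L) * f' s)"
proof -
  have "curvature f s = 2 * pi * n / L \<longleftrightarrow> f'' s = (2 * pi * \<i> * of_int n / of_real L) * f' s" for s
  proof -
    have "f' s \<noteq> 0"
      using norm_f'[of s] by auto
    then have "f'' s = a * f' s \<longleftrightarrow> \<i> * of_real (curvature f s) = a" for a
      unfolding frenet by auto
    moreover have "\<i> * of_real (curvature f s) = 2 * pi * \<i> * of_int n / of_real L \<longleftrightarrow>
        curvature f s = 2 * pi * n / L"
      by (auto simp: complex_eq_iff)
    ultimately show ?thesis by blast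
  qed
  then show ?thesis by blast
qed

lemma tangent_ode_iff_fourier_mode:
  assumes "n \<noteq> 0"
  shows "(\<forall>s. f'' s = (2 * pi * \<i> * of_int n / of_real L) * f' s) \<longleftrightarrow>
    (\<exists>c w. w \<noteq> 0 \<and> (\<forall>s. f s = c + w * fourier_mode L n s))"
proof
  define a where "a = 2 * pi * \<i> * of_int n / of_real L"
  have "a \<noteq> 0"
    using assms L_pos unfolding a_def by simp
  have mode: "fourier_mode L n s = exp (a * of_real s)" for s
    unfolding a_def fourier_mode_eq_exp_linear ..
  {
    assume "\<forall>s. f'' s = a * f' s"
    then have "f s = (f 0 - f' 0 / a) + f' 0 / a * fourier_mode L n s" for s
      unfolding mode using has_vector_derivative_f has_vector_derivative_f' \<open>a \<noteq> 0\<close>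
      by (intro exp_solution_of_linear_ode) auto
    moreover have "f' 0 / a \<noteq> 0"
      using norm_f'[of 0] \<open>a \<noteq> 0\<close> by auto
    ultimately show "\<exists>c w. w \<noteq> 0 \<and> (\<forall>s. f s = c + w * fourier_mode L n s)"
      by blast
  }
  {
    assume "\<exists>c w. w \<noteq> 0 \<and> (\<forall>s. f s = c + w * fourier_mode L n s)"
    then obtain c w where f: "f = (\<lambda>s. c + w * exp (a * of_real s))"
      unfolding mode by blast
    have exp: "((\<lambda>x. exp (a * of_real x)) has_vector_derivative a * exp (a * of_real x)) (at x)" for x
      by (rule has_vector_derivative_real_field) (auto intro!: derivative_eq_intros)
    have "(f has_vector_derivative w * (a * exp (a * of_real s))) (at s)" for s
      unfolding f by (auto intro!: derivative_eq_intros exp)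
    then have f': "f' = (\<lambda>s. w * (a * exp (a * of_real s)))"
      using has_vector_derivative_f vector_derivative_unique_at by blast
    have "(f' has_vector_derivative a * (w * (a * exp (a * of_real s)))) (at s)" for s
      unfolding f' by (auto intro!: derivative_eq_intros exp)
    then show "\<forall>s. f'' s = a * f' s"
      using has_vector_derivative_f' vector_derivative_unique_at unfolding f' by blast
  }
qed

lemma constant_curvature_iff_n_fold_circle:
  assumes "n \<noteq> 0"
  shows "(\<forall>s. curvature f s = 2 * pi * n / L) \<longleftrightarrow> is_n_fold_circle f L n"
  unfolding constant_curvature_iff tangent_ode_iff_fourier_mode[OF assms] is_n_fold_circle_iff[OF L_pos assms] ..

end

theorem mainTheorem2:
  fixes f :: "real \<Rightarrow> complex" and L :: real and n :: int
  assumes "closed_arclength_curve f L"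
    and "rotation_number f L = of_int n"
    and "n \<ge> 1"
  shows "((\<lambda>k. 16 * pi ^ 4 / L ^ 3 * (of_int k ^ 3 * of_int (k - n) * (norm (fourier_coeff f L k))\<^sup>2))
            has_sum I0 f L) (UNIV :: int set) \<and>
    ((\<lambda>k. 16 * pi ^ 4 / L ^ 3 * (of_int k ^ 2 * (of_int (k - n))\<^sup>2 * (norm (fourier_coeff f L k))\<^sup>2))
            has_sum I0 f L) (UNIV :: int set) \<and>
    I0 f L \<ge> 0 \<and>
    (I0 f L = 0 \<longleftrightarrow> is_n_fold_circle f L n)"
proof -
  interpret closed_unit_speed_curve f L n
    using assms(1,2) by unfold_locales
  have "n \<noteq> 0"
    using assms(3) by simp
  then show ?thesis
    using has_sum_cubic_weights has_sum_square_weights I0_nonneg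
      I0_eq_0_iff_constant_curvature constant_curvature_iff_n_fold_circle by blast
qed

end
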